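(* Let $(Y_1,\dots,Y_N)$ be multinomially distributed with $2N$ trials and $N$ categories each of probability $1/N$, and define $\xi_k^N=\frac1N\sum_{i=1}^N 1_{\{Y_i=k\}}$ for $0\le k\le 2N$ and $\xi_k^N=0$ for $k>2N$. Let $\mathcal{P}_k^2=e^{-2}2^k/k!$, $k\in\mathbb{N}_0$. Then for every $\varepsilon>0$, $$\mathbb{P}\Big\{\sum_{k=0}^\infty (k+1)^2\,|\xi_k^N-\mathcal{P}_k^2|>\varepsilon\Big\}\to0\quad\text{as }N\to\infty.$$ *)

theory Defs
  imports "HOL-Probability.Probability"
begin

text \<open>Multinomial distribution with n trials and m equiprobable categories
  (categories indexed 0..m-1): the law of the vector of category counts of
  n independent uniform draws from {0..<m}.\<close>
definition multinomial_pmf :: "nat \<Rightarrow> nat \<Rightarrow> (nat \<Rightarrow> nat) pmf" where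
  "multinomial_pmf n m =
     map_pmf (\<lambda>f i. if i < m then card {j \<in> {..<n}. f j = i} else 0)
       (pmf_of_set (PiE {..<n} (\<lambda>_. {..<m})))"

definition xi :: "nat \<Rightarrow> (nat \<Rightarrow> nat) \<Rightarrow> nat \<Rightarrow> real" where
  "xi N Y k = (if k \<le> 2 * N then (1 / real N) * real (card {i \<in> {..<N}. Y i = k}) else 0)"

definition poisson2 :: "nat \<Rightarrow> real" where
  "poisson2 k = exp (-2) * 2 ^ k / fact k"

end

theory Submission
  imports Defs
begin

text \<open>
  Drop 2N balls uniformly into N boxes and let xi_k be the fraction of boxes holding k balls.
  By exchangeability, E xi_k is the probability that a given box receives k balls, a
  Binomial(2N, 1/N) weight tending to the Poisson(2) weight P_k, and E xi_k^2 is asymptotically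
  the probability that two given boxes both receive k balls, which tends to P_k^2; hence
  E (xi_k - P_k)^2 tends to 0 for each fixed k. For the tail, (k+1)^2 <= 8^k/(K+1) when k > K, and
  E 8^Y = (1 + 7/N)^(2N) <= e^14 for the occupancy Y of a box, so the weighted tail of xi beyond K
  is small in mean uniformly in N. Splitting the series at K into a finite head (Chebyshev), the
  tail of xi (Markov) and the tail of the Poisson weights, each below eps/3, gives the claim.
\<close>

section \<open>Occupancy counts of uniform allocations\<close>

definition draws :: "nat \<Rightarrow> nat \<Rightarrow> (nat \<Rightarrow> nat) set" where
  "draws n m = PiE {..<n} (\<lambda>_. {..<m})"

definition occupancy :: "nat \<Rightarrow> (nat \<Rightarrow> nat) \<Rightarrow> nat \<Rightarrow> nat" where
  "occupancy n f i = card {j \<in> {..<n}. f j = i}"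

definition occupancy_count :: "nat \<Rightarrow> nat \<Rightarrow> (nat \<Rightarrow> nat) \<Rightarrow> nat \<Rightarrow> nat" where
  "occupancy_count n m f k = card {i \<in> {..<m}. occupancy n f i = k}"

lemma finite_draws [simp]: "finite (draws n m)"
  by (simp add: draws_def finite_PiE)

lemma card_draws: "card (draws n m) = m ^ n"
  by (simp add: draws_def card_PiE)

lemma occupancy_le: "occupancy n f i \<le> n"
  unfolding occupancy_def by (rule order.trans[OF card_mono[of "{..<n}"]]) auto

lemma prod_if_mem_const:
  assumes "finite J" "U \<subseteq> J"
  shows "(\<Prod>j\<in>J. if j \<in> U then 1 else c) = (c::'a::comm_monoid_mult) ^ (card J - card U)"
proof -
  have "(\<Prod>j\<in>J. if j \<in> U then 1 else c) = (\<Prod>j\<in>J - U. c)"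
    using assms by (subst prod.If_cases) (auto simp: Int_absorb1 Diff_eq)
  then show ?thesis
    using assms by (simp add: card_Diff_subset finite_subset)
qed

lemma fibre_value_iff:
  assumes "V \<subseteq> {..<m}" "disjoint_family_on A V"
  shows "y < m \<and> (\<forall>v\<in>V. y = v \<longleftrightarrow> j \<in> A v) \<longleftrightarrow>
    y \<in> (if j \<in> \<Union>(A ` V) then {v \<in> V. j \<in> A v} else {..<m} - V)"
  using assms unfolding disjoint_family_on_def by auto

lemma draws_with_fibres:
  assumes "V \<subseteq> {..<m}" "disjoint_family_on A V" "\<And>v. v \<in> V \<Longrightarrow> A v \<subseteq> {..<n}"
  shows "{f \<in> draws n m. \<forall>v\<in>V. {j \<in> {..<n}. f j = v} = A v} =
    PiE {..<n} (\<lambda>j. if j \<in> \<Union>(A ` V) then {v \<in> V. j \<in> A v} else {..<m} - V)"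
    (is "?L = PiE _ ?R")
proof (intro set_eqI)
  fix f
  have "f \<in> ?L \<longleftrightarrow> f \<in> extensional {..<n} \<and> (\<forall>j<n. f j < m \<and> (\<forall>v\<in>V. f j = v \<longleftrightarrow> j \<in> A v))"
    using assms(3) unfolding draws_def PiE_iff by blast
  also have "\<dots> \<longleftrightarrow> f \<in> PiE {..<n} ?R"
    unfolding PiE_iff using fibre_value_iff[OF assms(1,2)] by blast
  finally show "f \<in> ?L \<longleftrightarrow> f \<in> PiE {..<n} ?R" .
qed

lemma card_draws_with_fibres:
  assumes "V \<subseteq> {..<m}" "disjoint_family_on A V" "\<And>v. v \<in> V \<Longrightarrow> A v \<subseteq> {..<n}"
  shows "card {f \<in> draws n m. \<forall>v\<in>V. {j \<in> {..<n}. f j = v} = A v} =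
    (m - card V) ^ (n - card (\<Union>(A ` V)))"
proof -
  have single: "card {v \<in> V. j \<in> A v} = 1" if j: "j \<in> \<Union>(A ` V)" for j
  proof -
    obtain v where "v \<in> V" "j \<in> A v" using j by blast
    then have "{v \<in> V. j \<in> A v} = {v}"
      using assms(2) unfolding disjoint_family_on_def by blast
    then show ?thesis by simp
  qed
  have "card {f \<in> draws n m. \<forall>v\<in>V. {j \<in> {..<n}. f j = v} = A v} =
      (\<Prod>j<n. card (if j \<in> \<Union>(A ` V) then {v \<in> V. j \<in> A v} else {..<m} - V))"
    by (subst draws_with_fibres[OF assms]) (simp_all add: card_PiE)
  also have "\<dots> = (\<Prod>j<n. if j \<in> \<Union>(A ` V) then 1 else m - card V)"
    using assms(1) single by (intro prod.cong) (auto simp: card_Diff_subset finite_subset)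
  also have "\<dots> = (m - card V) ^ (n - card (\<Union>(A ` V)))"
    using assms(3) by (subst prod_if_mem_const) auto
  finally show ?thesis .
qed

lemma card_occupancy_eq:
  assumes "i < m"
  shows "card {f \<in> draws n m. occupancy n f i = k} = (n choose k) * (m - 1) ^ (n - k)"
proof -
  let ?S = "{A. A \<subseteq> {..<n} \<and> card A = k}"
  let ?fibre = "\<lambda>A. {f \<in> draws n m. {j \<in> {..<n}. f j = i} = A}"
  have "{f \<in> draws n m. occupancy n f i = k} = (\<Union>A\<in>?S. ?fibre A)"
    unfolding occupancy_def by auto
  moreover have "card (\<Union>A\<in>?S. ?fibre A) = (\<Sum>A\<in>?S. card (?fibre A))"
    by (rule card_UN_disjoint) (auto intro: finite_subset[of _ "Pow {..<n}"])
  ultimately have "card {f \<in> draws n m. occupancy n f i = k} = (\<Sum>A\<in>?S. card (?fibre A))"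
    by simp
  also have "\<dots> = (\<Sum>A\<in>?S. (m - 1) ^ (n - k))"
  proof (intro sum.cong refl)
    fix A assume "A \<in> ?S"
    then show "card (?fibre A) = (m - 1) ^ (n - k)"
      using assms card_draws_with_fibres[of "{i}" m "\<lambda>_. A" n] by (simp add: disjoint_family_on_def)
  qed
  also have "\<dots> = (n choose k) * (m - 1) ^ (n - k)"
    using n_subsets[of "{..<n}" k] by simp
  finally show ?thesis .
qed

lemma card_draws_with_two_fibres:
  assumes "i < m" "i' < m" "i \<noteq> i'" "A \<subseteq> {..<n}" "B \<subseteq> {..<n}" "A \<inter> B = {}"
  shows "card {f \<in> draws n m. {j \<in> {..<n}. f j = i} = A \<and> {j \<in> {..<n}. f j = i'} = B} =
    (m - 2) ^ (n - card (A \<union> B))"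
proof -
  let ?AB = "\<lambda>v. if v = i then A else B"
  have "disjoint_family_on ?AB {i, i'}" "\<And>v. v \<in> {i, i'} \<Longrightarrow> ?AB v \<subseteq> {..<n}"
    using assms by (auto simp: disjoint_family_on_def)
  from card_draws_with_fibres[OF _ this] assms show ?thesis
    by (simp add: Un_commute numeral_2_eq_2)
qed

lemma card_occupancy_eq_pair:
  assumes "i < m" "i' < m" "i \<noteq> i'"
  shows "card {f \<in> draws n m. occupancy n f i = k \<and> occupancy n f i' = k} =
    (n choose k) * ((n - k) choose k) * (m - 2) ^ (n - 2 * k)"
proof -
  let ?S = "{A. A \<subseteq> {..<n} \<and> card A = k}"
  let ?T = "\<lambda>A. {B. B \<subseteq> {..<n} - A \<and> card B = k}"
  let ?fibre = "\<lambda>p. {f \<in> draws n m. {j \<in> {..<n}. f j = i} = fst p \<and> {j \<in> {..<n}. f j = i'} = snd p}"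
  let ?L = "{f \<in> draws n m. occupancy n f i = k \<and> occupancy n f i' = k}"
  have "?L = (\<Union>p\<in>Sigma ?S ?T. ?fibre p)"
  proof (intro equalityI subsetI)
    fix f assume f: "f \<in> ?L"
    let ?A = "{j \<in> {..<n}. f j = i}" and ?B = "{j \<in> {..<n}. f j = i'}"
    have "(?A, ?B) \<in> Sigma ?S ?T" "f \<in> ?fibre (?A, ?B)"
      using f assms unfolding occupancy_def by auto
    then show "f \<in> (\<Union>p\<in>Sigma ?S ?T. ?fibre p)" by blast
  qed (auto simp: occupancy_def)
  moreover have "finite (Sigma ?S ?T)"
    by (rule finite_subset[of _ "Pow {..<n} \<times> Pow {..<n}"]) auto
  ultimately have "card ?L = (\<Sum>p\<in>Sigma ?S ?T. card (?fibre p))"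
    by (simp only:) (rule card_UN_disjoint; auto)
  also have "\<dots> = (\<Sum>p\<in>Sigma ?S ?T. (m - 2) ^ (n - 2 * k))"
  proof (intro sum.cong refl)
    fix p assume "p \<in> Sigma ?S ?T"
    then obtain A B where p: "p = (A, B)" "A \<subseteq> {..<n}" "card A = k" "B \<subseteq> {..<n} - A" "card B = k"
      by auto
    then have "A \<inter> B = {}"
      by auto
    with p have "card (A \<union> B) = 2 * k"
      by (subst card_Un_disjoint) (auto intro: finite_subset)
    with p assms \<open>A \<inter> B = {}\<close> show "card (?fibre p) = (m - 2) ^ (n - 2 * k)"
      using card_draws_with_two_fibres[of i m i' A n B] by auto
  qed
  also have "\<dots> = card (Sigma ?S ?T) * (m - 2) ^ (n - 2 * k)"
    by simp
  also have "card (Sigma ?S ?T) = (\<Sum>A\<in>?S. card (?T A))"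
    by (rule card_SigmaI) (auto intro: finite_subset[of _ "Pow {..<n}"])
  also have "(\<Sum>A\<in>?S. card (?T A)) = (\<Sum>A\<in>?S. (n - k) choose k)"
    by (intro sum.cong refl) (auto simp: n_subsets card_Diff_subset finite_subset)
  finally show ?thesis
    using n_subsets[of "{..<n}" k] by simp
qed

lemma sum_card_filter_swap:
  assumes "finite A" "finite I"
  shows "(\<Sum>a\<in>A. card {i \<in> I. P a i}) = (\<Sum>i\<in>I. card {a \<in> A. P a i})"
proof -
  have card_filter: "card {x \<in> X. Q x} = (\<Sum>x\<in>X. if Q x then 1 else 0)" if "finite X" for X Q
    using that by (simp add: sum.inter_filter[symmetric])
  show ?thesis
    using assms by (simp add: card_filter sum.swap[of _ A])
qed

lemma sum_occupancy_count:
  "(\<Sum>f\<in>draws n m. occupancy_count n m f k) = m * ((n choose k) * (m - 1) ^ (n - k))"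
  unfolding occupancy_count_def
  by (subst sum_card_filter_swap) (simp_all add: card_occupancy_eq)

lemma sum_if_eq_else_const:
  assumes "finite I" "i \<in> I"
  shows "(\<Sum>j\<in>I. if j = i then a else b) = a + of_nat (card I - 1) * (b :: 'a::comm_semiring_1)"
proof -
  have "(\<Sum>j\<in>I. if j = i then a else b) = a + (\<Sum>j\<in>I - {i}. b)"
    using assms by (subst sum.remove[of _ i]) (auto intro: sum.cong)
  then show ?thesis
    using assms by simp
qed

lemma sum_occupancy_count_squared:
  "(\<Sum>f\<in>draws n m. occupancy_count n m f k ^ 2) =
    m * ((n choose k) * (m - 1) ^ (n - k) +
      (m - 1) * ((n choose k) * ((n - k) choose k) * (m - 2) ^ (n - 2 * k)))"
proof -
  let ?c1 = "(n choose k) * (m - 1) ^ (n - k)"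
  let ?c2 = "(n choose k) * ((n - k) choose k) * (m - 2) ^ (n - 2 * k)"
  have "occupancy_count n m f k ^ 2 =
      card {p \<in> {..<m} \<times> {..<m}. occupancy n f (fst p) = k \<and> occupancy n f (snd p) = k}" for f
  proof -
    have "{p \<in> {..<m} \<times> {..<m}. occupancy n f (fst p) = k \<and> occupancy n f (snd p) = k} =
        {i \<in> {..<m}. occupancy n f i = k} \<times> {i \<in> {..<m}. occupancy n f i = k}"
      by auto
    then show ?thesis
      by (simp add: occupancy_count_def power2_eq_square card_cartesian_product)
  qed
  then have "(\<Sum>f\<in>draws n m. occupancy_count n m f k ^ 2) =
      (\<Sum>f\<in>draws n m. card {p \<in> {..<m} \<times> {..<m}. occupancy n f (fst p) = k \<and> occupancy n f (snd p) = k})"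
    by simp
  also have "\<dots> =
      (\<Sum>p\<in>{..<m} \<times> {..<m}. card {f \<in> draws n m. occupancy n f (fst p) = k \<and> occupancy n f (snd p) = k})"
    by (rule sum_card_filter_swap) auto
  also have "\<dots> = (\<Sum>i<m. \<Sum>i'<m. card {f \<in> draws n m. occupancy n f i = k \<and> occupancy n f i' = k})"
    by (simp add: sum.cartesian_product case_prod_beta')
  also have "\<dots> = (\<Sum>i<m. \<Sum>i'<m. if i' = i then ?c1 else ?c2)"
    by (intro sum.cong refl) (simp add: card_occupancy_eq card_occupancy_eq_pair)
  also have "\<dots> = (\<Sum>i<m. ?c1 + (m - 1) * ?c2)"
    by (intro sum.cong refl) (simp add: sum_if_eq_else_const)
  finally show ?thesis by simp
qed

lemma sum_weighted_occupancy_count: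
  "(\<Sum>k\<le>n. w k * of_nat (occupancy_count n m f k)) = (\<Sum>i<m. w (occupancy n f i) :: 'a::comm_semiring_1)"
proof -
  have "(\<Sum>k\<le>n. w k * of_nat (occupancy_count n m f k)) = (\<Sum>k\<le>n. \<Sum>i<m. if occupancy n f i = k then w k else 0)"
    by (simp add: occupancy_count_def sum.If_cases Int_def mult.commute)
  also have "\<dots> = (\<Sum>i<m. \<Sum>k\<le>n. if occupancy n f i = k then w k else 0)"
    by (rule sum.swap)
  also have "\<dots> = (\<Sum>i<m. w (occupancy n f i))"
    using occupancy_le[of n f] by (simp add: sum.delta')
  finally show ?thesis .
qed

lemma sum_power_occupancy:
  assumes "i < m"
  shows "(\<Sum>f\<in>draws n m. b ^ occupancy n f i) = (of_nat (m - 1) + b :: 'a::comm_semiring_1) ^ n"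
proof -
  have "b ^ occupancy n f i = (\<Prod>j<n. if f j = i then b else 1)" for f
    by (simp add: occupancy_def prod.If_cases Int_def)
  then have "(\<Sum>f\<in>draws n m. b ^ occupancy n f i) = (\<Sum>f\<in>draws n m. \<Prod>j<n. if f j = i then b else 1)"
    by simp
  also have "\<dots> = (\<Prod>j<n. \<Sum>y<m. if y = i then b else 1)"
    unfolding draws_def by (rule prod_sum_PiE[symmetric]) auto
  also have "(\<Sum>y<m. if y = i then b else 1) = of_nat (m - 1) + b"
    using assms by (simp add: sum_if_eq_else_const add.commute)
  finally show ?thesis by simp
qed

section \<open>Limits of the first two moments\<close>

lemma tendsto_binomial_over_power:
  assumes "(\<lambda>N. real (g N) / real N) \<longlonglongrightarrow> c"
  shows "(\<lambda>N. real (g N choose k) / real N ^ k) \<longlonglongrightarrow> c ^ k / fact k"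
proof -
  have "real (g N choose k) / real N ^ k = (\<Prod>i<k. real (g N) / real N - real i / real N) / fact k" for N
  proof -
    have "real (g N choose k) * fact k = (\<Prod>i<k. real (g N) - real i)"
      unfolding binomial_gbinomial gbinomial_mult_fact' atLeast0LessThan ..
    then have "real (g N choose k) = (\<Prod>i<k. real (g N) - real i) / fact k"
      by (simp add: eq_divide_eq)
    moreover have "(\<Prod>i<k. real (g N) / real N - real i / real N) = (\<Prod>i<k. real (g N) - real i) / real N ^ k"
      by (simp add: diff_divide_distrib[symmetric] prod_dividef)
    ultimately show ?thesis
      by simp
  qed
  moreover have "(\<lambda>N. (\<Prod>i<k. real (g N) / real N - real i / real N) / fact k) \<longlonglongrightarrow> (\<Prod>i<k. c - 0) / fact k"
    by (intro tendsto_intros assms) auto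
  ultimately show ?thesis
    by simp
qed

lemma tendsto_double_minus_div:
  "(\<lambda>N. real (2 * N - j) / real N) \<longlonglongrightarrow> 2"
proof -
  have "(\<lambda>N. 2 - real j / real N) \<longlonglongrightarrow> 2 - 0"
    by (intro tendsto_intros)
  moreover have "\<forall>\<^sub>F N in sequentially. 2 - real j / real N = real (2 * N - j) / real N"
    by (rule eventually_sequentiallyI[of "j + 1"]) (auto simp: of_nat_diff field_simps)
  ultimately show ?thesis
    by (auto intro: Lim_transform_eventually)
qed

lemma tendsto_one_minus_power:
  "(\<lambda>N. (1 - c / real N) ^ (2 * N - j)) \<longlonglongrightarrow> exp (- 2 * c)"
proof -
  have "(\<lambda>N. ((1 + (- c) / real N) ^ N) ^ 2 / (1 - c / real N) ^ j) \<longlonglongrightarrow> exp (- c) ^ 2 / (1 - 0) ^ j"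
    by (intro tendsto_intros tendsto_exp_limit_sequentially) auto
  moreover have "exp (- c) ^ 2 = exp (- 2 * c)"
    by (simp flip: exp_of_nat_mult)
  moreover have "\<forall>\<^sub>F N in sequentially.
      ((1 + (- c) / real N) ^ N) ^ 2 / (1 - c / real N) ^ j = (1 - c / real N) ^ (2 * N - j)"
  proof (rule eventually_sequentiallyI[of "nat \<lceil>\<bar>c\<bar>\<rceil> + j + 1"])
    fix N assume N: "nat \<lceil>\<bar>c\<bar>\<rceil> + j + 1 \<le> N"
    then have "\<bar>c\<bar> < real N"
      by linarith
    then have "1 - c / real N \<noteq> 0"
      by (auto simp: field_simps)
    with N show "((1 + (- c) / real N) ^ N) ^ 2 / (1 - c / real N) ^ j = (1 - c / real N) ^ (2 * N - j)"
      by (simp add: power_diff power_mult[symmetric] mult.commute)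
  qed
  ultimately show ?thesis
    by (auto intro: Lim_transform_eventually)
qed

lemma power_diff_over_power:
  assumes "c \<le> N" "k \<le> n" "0 < N"
  shows "real (N - c) ^ (n - k) / real N ^ n = (1 - real c / real N) ^ (n - k) / real N ^ k"
proof -
  have "real (N - c) = real N * (1 - real c / real N)"
    using assms by (simp add: of_nat_diff field_simps)
  moreover have "real N ^ n = real N ^ (n - k) * real N ^ k"
    using assms by (simp flip: power_add)
  ultimately show ?thesis
    using assms by (simp add: power_mult_distrib)
qed

text \<open>Probabilities that a given box, resp. each of two given distinct boxes, receives exactly
  k of 2N balls dropped uniformly into N boxes.\<close>

definition occupancy_prob :: "nat \<Rightarrow> nat \<Rightarrow> real" where
  "occupancy_prob N k = real (2 * N choose k) * real (N - 1) ^ (2 * N - k) / real N ^ (2 * N)"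

definition joint_occupancy_prob :: "nat \<Rightarrow> nat \<Rightarrow> real" where
  "joint_occupancy_prob N k =
     real (2 * N choose k) * real ((2 * N - k) choose k) * real (N - 2) ^ (2 * N - 2 * k) / real N ^ (2 * N)"

lemma tendsto_occupancy_prob: "(\<lambda>N. occupancy_prob N k) \<longlonglongrightarrow> poisson2 k"
proof -
  let ?a = "\<lambda>N. real (2 * N - 0 choose k) / real N ^ k * (1 - 1 / real N) ^ (2 * N - k)"
  have "?a \<longlonglongrightarrow> 2 ^ k / fact k * exp (- 2 * 1)"
    by (intro tendsto_intros tendsto_binomial_over_power tendsto_double_minus_div tendsto_one_minus_power)
  moreover have "\<forall>\<^sub>F N in sequentially. ?a N = occupancy_prob N k"
  proof (rule eventually_sequentiallyI[of "k + 1"])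
    fix N assume "k + 1 \<le> N"
    then show "?a N = occupancy_prob N k"
      using arg_cong[OF power_diff_over_power[of 1 N k "2 * N"], of "(*) (real (2 * N choose k))"]
      by (simp add: occupancy_prob_def)
  qed
  ultimately show ?thesis
    by (auto simp: poisson2_def mult.commute intro: Lim_transform_eventually)
qed

lemma tendsto_joint_occupancy_prob: "(\<lambda>N. joint_occupancy_prob N k) \<longlonglongrightarrow> poisson2 k ^ 2"
proof -
  let ?a = "\<lambda>N. real (2 * N - 0 choose k) / real N ^ k * (real (2 * N - k choose k) / real N ^ k) *
    (1 - 2 / real N) ^ (2 * N - 2 * k)"
  have "?a \<longlonglongrightarrow> 2 ^ k / fact k * (2 ^ k / fact k) * exp (- 2 * 2)"
    by (intro tendsto_intros tendsto_binomial_over_power tendsto_double_minus_div tendsto_one_minus_power)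
  moreover have "\<forall>\<^sub>F N in sequentially. ?a N = joint_occupancy_prob N k"
  proof (rule eventually_sequentiallyI[of "k + 2"])
    fix N assume "k + 2 \<le> N"
    then show "?a N = joint_occupancy_prob N k"
      using arg_cong[OF power_diff_over_power[of 2 N "2 * k" "2 * N"],
          of "(*) (real (2 * N choose k) * real (2 * N - k choose k))"]
      by (simp add: joint_occupancy_prob_def power_add[symmetric] mult_2)
  qed
  moreover have "2 ^ k / fact k * (2 ^ k / fact k) * exp (- 2 * 2) = poisson2 k ^ 2"
    by (simp add: poisson2_def power2_eq_square flip: exp_add)
  ultimately show ?thesis
    by (auto intro: Lim_transform_eventually)
qed

definition occupancy_vector :: "nat \<Rightarrow> nat \<Rightarrow> (nat \<Rightarrow> nat) \<Rightarrow> nat \<Rightarrow> nat" where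
  "occupancy_vector n m f i = (if i < m then occupancy n f i else 0)"

lemma prob_multinomial_pmf:
  assumes "0 < m"
  shows "measure_pmf.prob (multinomial_pmf n m) X =
    real (card {f \<in> draws n m. occupancy_vector n m f \<in> X}) / real m ^ n"
proof -
  have "draws n m \<noteq> {}"
    using assms card_draws[of n m] by (metis card.empty power_not_zero not_gr0)
  moreover have "multinomial_pmf n m = map_pmf (occupancy_vector n m) (pmf_of_set (draws n m))"
    unfolding multinomial_pmf_def draws_def
    by (intro map_pmf_cong refl) (simp add: occupancy_vector_def occupancy_def fun_eq_iff)
  ultimately show ?thesis
    by (simp add: measure_pmf_of_set card_draws Int_def conj_commute)
qed

abbreviation xi_draw :: "nat \<Rightarrow> (nat \<Rightarrow> nat) \<Rightarrow> nat \<Rightarrow> real" where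
  "xi_draw N f \<equiv> xi N (occupancy_vector (2 * N) N f)"

lemma xi_draw_eq:
  "xi_draw N f k = (if k \<le> 2 * N then real (occupancy_count (2 * N) N f k) / real N else 0)"
  unfolding xi_def occupancy_count_def occupancy_vector_def
  by (auto intro!: arg_cong[where f = card])

lemma xi_nonneg: "0 \<le> xi N Y k"
  by (simp add: xi_def)

definition mean_sq_dev :: "nat \<Rightarrow> nat \<Rightarrow> real" where
  "mean_sq_dev N k = (\<Sum>f\<in>draws (2 * N) N. (xi_draw N f k - poisson2 k) ^ 2) / real N ^ (2 * N)"

lemma mean_sq_dev_eq:
  assumes "0 < N" "k \<le> 2 * N"
  shows "mean_sq_dev N k = occupancy_prob N k / real N + (1 - 1 / real N) * joint_occupancy_prob N k
    - 2 * poisson2 k * occupancy_prob N k + poisson2 k ^ 2"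
proof -
  let ?D = "draws (2 * N) N" and ?P = "poisson2 k"
  let ?c = "\<lambda>f. real (occupancy_count (2 * N) N f k)"
  define M where "M = real N ^ (2 * N)"
  have "0 < M"
    using assms by (simp add: M_def)
  have p: "occupancy_prob N k * M = real (2 * N choose k) * real (N - 1) ^ (2 * N - k)"
    using \<open>0 < M\<close> by (simp add: occupancy_prob_def M_def)
  have q: "joint_occupancy_prob N k * M =
      real (2 * N choose k) * real ((2 * N - k) choose k) * real (N - 2) ^ (2 * N - 2 * k)"
    using \<open>0 < M\<close> by (simp add: joint_occupancy_prob_def M_def)
  have s1: "(\<Sum>f\<in>?D. ?c f) = real N * (occupancy_prob N k * M)"
    unfolding p using arg_cong[OF sum_occupancy_count[of "2 * N" N k], of real] by simp
  have s2: "(\<Sum>f\<in>?D. ?c f ^ 2) = real N * (occupancy_prob N k * M + (real N - 1) * (joint_occupancy_prob N k * M))"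
    unfolding p q using arg_cong[OF sum_occupancy_count_squared[of "2 * N" N k], of real] assms
    by (simp add: of_nat_diff)
  have "(\<Sum>f\<in>?D. (xi_draw N f k - ?P) ^ 2) = (\<Sum>f\<in>?D. ?c f ^ 2 / real N ^ 2 - 2 * ?P * (?c f / real N) + ?P ^ 2)"
    using assms by (intro sum.cong refl) (simp add: xi_draw_eq power2_diff power_divide)
  also have "\<dots> = (\<Sum>f\<in>?D. ?c f ^ 2) / real N ^ 2 - 2 * ?P * ((\<Sum>f\<in>?D. ?c f) / real N) + ?P ^ 2 * M"
    by (simp add: sum.distrib sum_subtractf sum_divide_distrib[symmetric] sum_distrib_left[symmetric]
        card_draws M_def)
  also have "\<dots> = (occupancy_prob N k / real N + (1 - 1 / real N) * joint_occupancy_prob N k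
      - 2 * ?P * occupancy_prob N k + ?P ^ 2) * M"
    unfolding s1 s2 using assms by (simp add: field_simps power2_eq_square)
  finally show ?thesis
    using \<open>0 < M\<close> by (simp add: mean_sq_dev_def M_def)
qed

lemma tendsto_mean_sq_dev: "(\<lambda>N. mean_sq_dev N k) \<longlonglongrightarrow> 0"
proof -
  let ?P = "poisson2 k"
  let ?a = "\<lambda>N. occupancy_prob N k * (1 / real N) + (1 - 1 / real N) * joint_occupancy_prob N k
    - 2 * ?P * occupancy_prob N k + ?P ^ 2"
  have "?a \<longlonglongrightarrow> ?P * 0 + (1 - 0) * ?P ^ 2 - 2 * ?P * ?P + ?P ^ 2"
    by (intro tendsto_intros tendsto_occupancy_prob tendsto_joint_occupancy_prob)
  moreover have "\<forall>\<^sub>F N in sequentially. ?a N = mean_sq_dev N k"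
    by (rule eventually_sequentiallyI[of "k + 1"]) (simp add: mean_sq_dev_eq)
  ultimately show ?thesis
    by (auto simp: power2_eq_square intro: Lim_transform_eventually)
qed

section \<open>Tail estimates\<close>

lemma succ_cube_le_power_8: "(real k + 1) ^ 3 \<le> 8 ^ k"
proof -
  have "real k + 1 \<le> 2 ^ k"
    using less_exp[of k] by (metis Suc_leI add.commute of_nat_Suc of_nat_le_iff of_nat_numeral of_nat_power)
  then have "(real k + 1) ^ 3 \<le> (2 ^ k) ^ 3"
    by (intro power_mono) auto
  then show ?thesis
    by (simp add: power3_eq_cube power_mult_distrib[symmetric])
qed

lemma summable_weighted_poisson2: "summable (\<lambda>k. (real k + 1) ^ 2 * poisson2 k)"
proof (rule summable_comparison_test)
  show "summable (\<lambda>k. exp (-2) * (inverse (fact k) * 16 ^ k) :: real)"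
    by (intro summable_mult summable_exp)
  have "norm ((real k + 1) ^ 2 * poisson2 k) \<le> exp (-2) * (inverse (fact k) * 16 ^ k)" for k
  proof -
    have "(real k + 1) ^ 2 \<le> 8 ^ k"
      using succ_cube_le_power_8[of k] power_increasing[of 2 3 "real k + 1"] by simp
    then have "(real k + 1) ^ 2 * poisson2 k \<le> 8 ^ k * poisson2 k"
      by (intro mult_right_mono) (simp_all add: poisson2_def)
    also have "\<dots> = exp (-2) * (inverse (fact k) * 16 ^ k)"
      by (simp add: poisson2_def field_simps flip: power_mult_distrib)
    finally show ?thesis
      by (simp add: poisson2_def)
  qed
  then show "\<exists>N. \<forall>k\<ge>N. norm ((real k + 1) ^ 2 * poisson2 k) \<le> exp (-2) * (inverse (fact k) * 16 ^ k)"
    by blast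
qed

lemma suminf_weighted_abs_diff_le:
  fixes c p q :: "nat \<Rightarrow> real"
  assumes "summable (\<lambda>k. c k * q k)"
    and "\<And>k. 0 \<le> c k" "\<And>k. 0 \<le> p k" "\<And>k. 0 \<le> q k" "\<And>k. n < k \<Longrightarrow> p k = 0"
  shows "(\<Sum>k. c k * \<bar>p k - q k\<bar>) \<le>
    (\<Sum>k\<le>K. c k * \<bar>p k - q k\<bar>) + (\<Sum>k\<in>{K<..n}. c k * p k) + (\<Sum>i. c (i + Suc K) * q (i + Suc K))"
proof -
  define a where "a k = c k * \<bar>p k - q k\<bar>" for k
  define head where "head = (\<lambda>k. if k \<in> {..K} then a k else 0)"
  define mid where "mid = (\<lambda>k. if k \<in> {K<..n} then c k * p k else 0)"
  define tail where "tail = (\<lambda>k. if K < k then c k * q k else 0)"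
  have a_le: "a k \<le> head k + mid k + tail k" for k
  proof (cases "k \<le> K")
    case False
    have "\<bar>p k - q k\<bar> \<le> p k + q k"
      using assms(3,4)[of k] by linarith
    then have "a k \<le> c k * p k + c k * q k"
      unfolding a_def using assms(2)[of k] by (metis distrib_left mult_left_mono)
    with False show ?thesis
      using assms(5)[of k] by (auto simp: head_def mid_def tail_def)
  qed (simp add: head_def mid_def tail_def assms)
  have head: "head sums (\<Sum>k\<le>K. a k)"
    unfolding head_def by (rule sums_If_finite_set) simp
  have mid: "mid sums (\<Sum>k\<in>{K<..n}. c k * p k)"
    unfolding mid_def by (rule sums_If_finite_set) simp
  have "summable tail"
    by (rule summable_comparison_test[OF _ assms(1)]) (auto simp: tail_def assms(2,4))
  then have tail: "(\<Sum>k. tail k) = (\<Sum>i. c (i + Suc K) * q (i + Suc K))"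
    by (subst suminf_split_initial_segment[of _ "Suc K"]) (auto simp: tail_def)
  have "summable (\<lambda>k. head k + mid k + tail k)"
    using head mid \<open>summable tail\<close> by (intro summable_add) (auto simp: sums_iff)
  moreover have "summable a"
    by (rule summable_comparison_test[OF _ calculation])
      (use a_le assms(2) in \<open>auto simp: a_def\<close>)
  ultimately have "(\<Sum>k. a k) \<le> (\<Sum>k. head k + mid k + tail k)"
    by (intro suminf_le a_le)
  also have "\<dots> = (\<Sum>k\<le>K. a k) + (\<Sum>k\<in>{K<..n}. c k * p k) + (\<Sum>k. tail k)"
    using head mid \<open>summable tail\<close> by (simp add: suminf_add[symmetric] sums_iff summable_add)
  finally show ?thesis
    by (simp add: a_def tail)
qed

lemma weighted_tail_le:
  assumes "0 < N"
  shows "(\<Sum>k\<in>{K<..2 * N}. (real k + 1) ^ 2 * xi_draw N f k) \<le>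
    (\<Sum>i<N. 8 ^ occupancy (2 * N) f i) / (real N * (real K + 1))"
proof -
  have "(real k + 1) ^ 2 \<le> 8 ^ k / (real K + 1)" if "K < k" for k
  proof -
    have "(real k + 1) ^ 2 * (real K + 1) \<le> (real k + 1) ^ 2 * (real k + 1)"
      using that by (intro mult_left_mono) auto
    also have "\<dots> \<le> 8 ^ k"
      using succ_cube_le_power_8[of k] by (simp add: power3_eq_cube power2_eq_square)
    finally show ?thesis
      by (simp add: field_simps)
  qed
  then have "(\<Sum>k\<in>{K<..2 * N}. (real k + 1) ^ 2 * xi_draw N f k) \<le>
      (\<Sum>k\<in>{K<..2 * N}. 8 ^ k / (real K + 1) * xi_draw N f k)"
    by (intro sum_mono mult_right_mono) (auto simp: xi_nonneg)
  also have "\<dots> \<le> (\<Sum>k\<le>2 * N. 8 ^ k / (real K + 1) * xi_draw N f k)"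
    by (intro sum_mono2) (auto simp: xi_nonneg)
  also have "\<dots> = (\<Sum>k\<le>2 * N. 8 ^ k * real (occupancy_count (2 * N) N f k) / (real N * (real K + 1)))"
    by (intro sum.cong refl) (simp add: xi_draw_eq)
  also have "\<dots> = (\<Sum>k\<le>2 * N. 8 ^ k * real (occupancy_count (2 * N) N f k)) / (real N * (real K + 1))"
    by (simp add: sum_divide_distrib)
  also have "\<dots> = (\<Sum>i<N. 8 ^ occupancy (2 * N) f i) / (real N * (real K + 1))"
    by (simp only: sum_weighted_occupancy_count)
  finally show ?thesis .
qed

lemma mean_weighted_tail_le:
  assumes "0 < N"
  shows "(\<Sum>f\<in>draws (2 * N) N. \<Sum>k\<in>{K<..2 * N}. (real k + 1) ^ 2 * xi_draw N f k) / real N ^ (2 * N)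
    \<le> exp 14 / (real K + 1)"
proof -
  have "(\<Sum>f\<in>draws (2 * N) N. \<Sum>k\<in>{K<..2 * N}. (real k + 1) ^ 2 * xi_draw N f k) \<le>
      (\<Sum>f\<in>draws (2 * N) N. \<Sum>i<N. 8 ^ occupancy (2 * N) f i) / (real N * (real K + 1))"
    by (subst sum_divide_distrib) (rule sum_mono, rule weighted_tail_le[OF assms])
  also have "(\<Sum>f\<in>draws (2 * N) N. \<Sum>i<N. (8::real) ^ occupancy (2 * N) f i) =
      (\<Sum>i<N. \<Sum>f\<in>draws (2 * N) N. 8 ^ occupancy (2 * N) f i)"
    by (rule sum.swap)
  also have "\<dots> = real N * (real N + 7) ^ (2 * N)"
    using assms by (simp add: sum_power_occupancy of_nat_diff add.commute)
  finally have "(\<Sum>f\<in>draws (2 * N) N. \<Sum>k\<in>{K<..2 * N}. (real k + 1) ^ 2 * xi_draw N f k)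
      \<le> (real N + 7) ^ (2 * N) / (real K + 1)"
    using assms by simp
  then have "(\<Sum>f\<in>draws (2 * N) N. \<Sum>k\<in>{K<..2 * N}. (real k + 1) ^ 2 * xi_draw N f k) / real N ^ (2 * N)
      \<le> (real N + 7) ^ (2 * N) / (real K + 1) / real N ^ (2 * N)"
    by (rule divide_right_mono) simp
  also have "\<dots> = ((real N + 7) / real N) ^ (2 * N) / (real K + 1)"
    by (simp add: power_divide)
  also have "((real N + 7) / real N) ^ (2 * N) \<le> exp (7 / real N) ^ (2 * N)"
    using exp_ge_add_one_self[of "7 / real N"] assms by (intro power_mono) (auto simp: field_simps)
  also have "exp (7 / real N) ^ (2 * N) = exp 14"
    using assms by (simp flip: exp_of_nat_mult)
  finally show ?thesis
    by (simp add: divide_right_mono)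
qed

section \<open>Convergence in probability\<close>

lemma card_Markov:
  fixes h :: "'a \<Rightarrow> real"
  assumes "finite A" "\<And>x. x \<in> A \<Longrightarrow> 0 \<le> h x" "0 < c"
  shows "real (card {x \<in> A. c \<le> h x}) \<le> (\<Sum>x\<in>A. h x) / c"
proof -
  have "c * real (card {x \<in> A. c \<le> h x}) = (\<Sum>x\<in>{x \<in> A. c \<le> h x}. c)"
    by simp
  also have "\<dots> \<le> (\<Sum>x\<in>{x \<in> A. c \<le> h x}. h x)"
    by (rule sum_mono) auto
  also have "\<dots> \<le> (\<Sum>x\<in>A. h x)"
    using assms by (intro sum_mono2) auto
  finally show ?thesis
    using assms(3) by (simp add: field_simps)
qed

lemma large_deviation_cases:
  assumes "0 < \<epsilon>" "\<epsilon> < (\<Sum>k. (real k + 1) ^ 2 * \<bar>xi_draw N f k - poisson2 k\<bar>)"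
    and "(\<Sum>i. (real (i + Suc K) + 1) ^ 2 * poisson2 (i + Suc K)) < \<epsilon> / 3"
  defines "\<delta> \<equiv> \<epsilon> / (3 * (real K + 1) ^ 3)"
  shows "(\<exists>k\<le>K. \<delta> ^ 2 \<le> (xi_draw N f k - poisson2 k) ^ 2) \<or>
    \<epsilon> / 3 \<le> (\<Sum>k\<in>{K<..2 * N}. (real k + 1) ^ 2 * xi_draw N f k)"
proof (rule ccontr)
  assume contra: "\<not> ?thesis"
  have "0 < \<delta>"
    using assms(1) by (simp add: \<delta>_def)
  have close: "\<bar>xi_draw N f k - poisson2 k\<bar> \<le> \<delta>" if "k \<le> K" for k
  proof -
    have "\<not> \<delta> ^ 2 \<le> (xi_draw N f k - poisson2 k) ^ 2"
      using contra that by blast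
    then have "\<bar>xi_draw N f k - poisson2 k\<bar> ^ 2 < \<delta> ^ 2"
      by simp
    then show ?thesis
      using \<open>0 < \<delta>\<close> by (simp add: power2_less_imp_less less_imp_le)
  qed
  have "(\<Sum>k\<le>K. (real k + 1) ^ 2 * \<bar>xi_draw N f k - poisson2 k\<bar>) \<le> (\<Sum>k\<le>K. (real K + 1) ^ 2 * \<delta>)"
    using close by (intro sum_mono mult_mono power_mono) auto
  also have "\<dots> = (real K + 1) ^ 3 * \<delta>"
    by (simp add: power2_eq_square power3_eq_cube)
  also have "\<dots> = \<epsilon> / 3"
    by (simp add: \<delta>_def)
  finally have head: "(\<Sum>k\<le>K. (real k + 1) ^ 2 * \<bar>xi_draw N f k - poisson2 k\<bar>) \<le> \<epsilon> / 3" .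
  have "(\<Sum>k. (real k + 1) ^ 2 * \<bar>xi_draw N f k - poisson2 k\<bar>) \<le>
      (\<Sum>k\<le>K. (real k + 1) ^ 2 * \<bar>xi_draw N f k - poisson2 k\<bar>) +
      (\<Sum>k\<in>{K<..2 * N}. (real k + 1) ^ 2 * xi_draw N f k) +
      (\<Sum>i. (real (i + Suc K) + 1) ^ 2 * poisson2 (i + Suc K))"
    by (rule suminf_weighted_abs_diff_le[OF summable_weighted_poisson2])
      (simp_all add: xi_nonneg poisson2_def xi_def)
  with head contra assms(2,3) show False
    by linarith
qed

lemma card_large_deviation_le:
  assumes "0 < \<epsilon>" "(\<Sum>i. (real (i + Suc K) + 1) ^ 2 * poisson2 (i + Suc K)) < \<epsilon> / 3"
  defines "\<delta> \<equiv> \<epsilon> / (3 * (real K + 1) ^ 3)"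
  shows "real (card {f \<in> draws (2 * N) N. \<epsilon> < (\<Sum>k. (real k + 1) ^ 2 * \<bar>xi_draw N f k - poisson2 k\<bar>)})
    \<le> (\<Sum>k\<le>K. real (card {f \<in> draws (2 * N) N. \<delta> ^ 2 \<le> (xi_draw N f k - poisson2 k) ^ 2}))
      + real (card {f \<in> draws (2 * N) N. \<epsilon> / 3 \<le> (\<Sum>k\<in>{K<..2 * N}. (real k + 1) ^ 2 * xi_draw N f k)})"
    (is "real (card ?bad) \<le> (\<Sum>k\<le>K. real (card (?dev k))) + real (card ?tail)")
proof -
  have "?bad \<subseteq> (\<Union>k\<le>K. ?dev k) \<union> ?tail"
    using large_deviation_cases[OF assms(1) _ assms(2)] by (fastforce simp: \<delta>_def)
  then have "card ?bad \<le> card ((\<Union>k\<le>K. ?dev k) \<union> ?tail)"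
    by (rule card_mono[rotated]) auto
  also have "\<dots> \<le> card (\<Union>k\<le>K. ?dev k) + card ?tail"
    by (rule card_Un_le)
  also have "card (\<Union>k\<le>K. ?dev k) \<le> (\<Sum>k\<le>K. card (?dev k))"
    by (rule card_UN_le) simp
  finally show ?thesis
    by (simp flip: of_nat_sum of_nat_add)
qed

lemma prob_large_deviation_le:
  assumes "0 < N" "0 < \<epsilon>" "(\<Sum>i. (real (i + Suc K) + 1) ^ 2 * poisson2 (i + Suc K)) < \<epsilon> / 3"
  defines "\<delta> \<equiv> \<epsilon> / (3 * (real K + 1) ^ 3)"
  shows "measure_pmf.prob (multinomial_pmf (2 * N) N)
      {Y. \<epsilon> < (\<Sum>k. (real k + 1) ^ 2 * \<bar>xi N Y k - poisson2 k\<bar>)}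
    \<le> (\<Sum>k\<le>K. mean_sq_dev N k / \<delta> ^ 2) + 3 * exp 14 / (\<epsilon> * (real K + 1))"
proof -
  let ?D = "draws (2 * N) N"
  let ?tail = "\<lambda>f. \<Sum>k\<in>{K<..2 * N}. (real k + 1) ^ 2 * xi_draw N f k"
  define M where "M = real N ^ (2 * N)"
  have "0 < M" "0 < \<delta>"
    using assms by (simp_all add: M_def \<delta>_def)
  have "real (card {f \<in> ?D. \<epsilon> < (\<Sum>k. (real k + 1) ^ 2 * \<bar>xi_draw N f k - poisson2 k\<bar>)})
      \<le> (\<Sum>k\<le>K. real (card {f \<in> ?D. \<delta> ^ 2 \<le> (xi_draw N f k - poisson2 k) ^ 2}))
        + real (card {f \<in> ?D. \<epsilon> / 3 \<le> ?tail f})"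
    unfolding \<delta>_def by (rule card_large_deviation_le[OF assms(2,3)])
  also have "\<dots> \<le> (\<Sum>k\<le>K. (\<Sum>f\<in>?D. (xi_draw N f k - poisson2 k) ^ 2) / \<delta> ^ 2)
      + (\<Sum>f\<in>?D. ?tail f) / (\<epsilon> / 3)"
    using \<open>0 < \<delta>\<close> assms(2)
    by (intro add_mono sum_mono card_Markov) (auto intro!: sum_nonneg simp: xi_nonneg)
  also have "\<dots> = ((\<Sum>k\<le>K. mean_sq_dev N k / \<delta> ^ 2) + 3 / \<epsilon> * ((\<Sum>f\<in>?D. ?tail f) / M)) * M"
    using \<open>0 < M\<close> by (simp add: mean_sq_dev_def M_def sum_divide_distrib[symmetric] field_simps)
  also have "\<dots> \<le> ((\<Sum>k\<le>K. mean_sq_dev N k / \<delta> ^ 2) + 3 / \<epsilon> * (exp 14 / (real K + 1))) * M"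
    using mean_weighted_tail_le[OF assms(1), of K] \<open>0 < M\<close> assms(2)
    by (intro mult_right_mono add_left_mono mult_left_mono) (simp_all add: M_def)
  finally show ?thesis
    using \<open>0 < M\<close> assms(1) by (simp add: prob_multinomial_pmf M_def[symmetric] pos_divide_le_eq)
qed

lemma cutoff_exists:
  assumes "0 < \<epsilon>" "0 < \<eta>"
  obtains K where "(\<Sum>i. (real (i + Suc K) + 1) ^ 2 * poisson2 (i + Suc K)) < \<epsilon> / 3"
    and "3 * exp 14 / (\<epsilon> * (real K + 1)) < \<eta>"
proof -
  obtain K0 where K0: "\<And>n. K0 \<le> n \<Longrightarrow> norm (\<Sum>i. (real (i + n) + 1) ^ 2 * poisson2 (i + n)) < \<epsilon> / 3"
    using suminf_exist_split[OF _ summable_weighted_poisson2, of "\<epsilon> / 3"] assms by auto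
  obtain K1 :: nat where K1: "3 * exp 14 / (\<epsilon> * \<eta>) < real K1"
    using reals_Archimedean2 by blast
  define K where "K = max K0 K1"
  have "norm (\<Sum>i. (real (i + Suc K) + 1) ^ 2 * poisson2 (i + Suc K)) < \<epsilon> / 3"
    by (rule K0) (simp add: K_def)
  then have tail: "(\<Sum>i. (real (i + Suc K) + 1) ^ 2 * poisson2 (i + Suc K)) < \<epsilon> / 3"
    by (simp only: real_norm_def abs_less_iff)
  have "3 * exp 14 < real K1 * (\<epsilon> * \<eta>)"
    using K1 assms by (simp add: field_simps)
  also have "\<dots> \<le> (real K + 1) * (\<epsilon> * \<eta>)"
    using assms by (intro mult_right_mono) (simp_all add: K_def)
  finally have "3 * exp 14 / (\<epsilon> * (real K + 1)) < \<eta>"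
    using assms by (simp add: pos_divide_less_eq ac_simps)
  with tail show ?thesis
    by (rule that)
qed

theorem lemma2p2:
  fixes \<epsilon> :: real
  assumes "\<epsilon> > 0"
  shows "(\<lambda>N. measure_pmf.prob (multinomial_pmf (2 * N) N)
            {Y. (\<Sum>k. (real k + 1)^2 * \<bar>xi N Y k - poisson2 k\<bar>) > \<epsilon>})
         \<longlonglongrightarrow> 0"
proof (rule order_tendstoI)
  fix \<eta> :: real
  assume "\<eta> < 0"
  then show "\<forall>\<^sub>F N in sequentially. \<eta> < measure_pmf.prob (multinomial_pmf (2 * N) N)
      {Y. (\<Sum>k. (real k + 1)^2 * \<bar>xi N Y k - poisson2 k\<bar>) > \<epsilon>}"
    by (intro always_eventually allI) (auto intro: less_le_trans[OF _ measure_nonneg])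
next
  fix \<eta> :: real
  assume "0 < \<eta>"
  then obtain K where tail: "(\<Sum>i. (real (i + Suc K) + 1) ^ 2 * poisson2 (i + Suc K)) < \<epsilon> / 3"
    and small: "3 * exp 14 / (\<epsilon> * (real K + 1)) < \<eta> / 2"
    using cutoff_exists[OF assms, of "\<eta> / 2"] by auto
  define \<delta> where "\<delta> = \<epsilon> / (3 * (real K + 1) ^ 3)"
  have "(\<lambda>N. \<Sum>k\<le>K. mean_sq_dev N k / \<delta> ^ 2) \<longlonglongrightarrow> (\<Sum>k\<le>K. 0 / \<delta> ^ 2)"
    by (intro tendsto_intros tendsto_mean_sq_dev) (use assms in \<open>simp add: \<delta>_def\<close>)
  then have "\<forall>\<^sub>F N in sequentially. (\<Sum>k\<le>K. mean_sq_dev N k / \<delta> ^ 2) < \<eta> / 2"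
    using \<open>0 < \<eta>\<close> by (intro order_tendstoD(2)) auto
  moreover have "\<forall>\<^sub>F N in sequentially. 0 < N"
    by (rule eventually_gt_at_top)
  ultimately show "\<forall>\<^sub>F N in sequentially. measure_pmf.prob (multinomial_pmf (2 * N) N)
      {Y. (\<Sum>k. (real k + 1)^2 * \<bar>xi N Y k - poisson2 k\<bar>) > \<epsilon>} < \<eta>"
  proof eventually_elim
    case (elim N)
    then show ?case
      using prob_large_deviation_le[OF elim(2) assms tail] small by (simp add: \<delta>_def)
  qed
qed

end
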